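(* Let $w\in W$ and $\alpha\in\Phi^+\cap w\Phi^-$ with $\ell(\sigma_\alpha w)=\ell(w)-1$. For $\beta\in(\Phi^+\cap w\Phi^-)\setminus\{\alpha\}$ define $\psi(\beta)=\beta-\alpha$ if $(\alpha,\beta)=1$, $\beta-\alpha\in\Phi^+$, and $\beta-\alpha\notin\Phi^+\cap w\Phi^-$; and $\psi(\beta)=\beta$ otherwise. Then $\psi$ is a bijection from $(\Phi^+\cap w\Phi^-)\setminus\{\alpha\}$ onto $\Phi^+\cap(\sigma_\alpha w)\Phi^-$. If moreover $w^{-1}\alpha\in-\Pi$, then $\Phi^+\cap(\sigma_\alpha w)\Phi^-=(\Phi^+\cap w\Phi^-)\setminus\{\alpha\}$.
   Context: $\Phi$ is a simply laced root system with positive roots $\Phi^+$, $\Phi^-=-\Phi^+$, simple roots $\Pi$, Weyl group $W$, length $\ell$, reflections $\sigma_\alpha$; the scalar product is normalized so that $(\alpha,\alpha)=2$ for all roots. *)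

theory Defs
  imports "HOL-Analysis.Analysis"
begin

definition refl :: "'a::real_inner \<Rightarrow> 'a \<Rightarrow> 'a" where
  "refl \<alpha> v = v - (2 * (v \<bullet> \<alpha>) / (\<alpha> \<bullet> \<alpha>)) *\<^sub>R \<alpha>"

definition root_system :: "'a::euclidean_space set \<Rightarrow> bool" where
  "root_system \<Phi> \<longleftrightarrow> finite \<Phi> \<and> 0 \<notin> \<Phi> \<and> span \<Phi> = UNIV
     \<and> (\<forall>\<alpha>\<in>\<Phi>. refl \<alpha> ` \<Phi> = \<Phi>)
     \<and> (\<forall>\<alpha>\<in>\<Phi>. \<forall>c. c *\<^sub>R \<alpha> \<in> \<Phi> \<longrightarrow> c = 1 \<or> c = -1)
     \<and> (\<forall>\<alpha>\<in>\<Phi>. \<forall>\<beta>\<in>\<Phi>. 2 * (\<beta> \<bullet> \<alpha>) / (\<alpha> \<bullet> \<alpha>) \<in> \<int>)"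

definition simply_laced_root_system :: "'a::euclidean_space set \<Rightarrow> bool" where
  "simply_laced_root_system \<Phi> \<longleftrightarrow> root_system \<Phi> \<and> (\<forall>\<alpha>\<in>\<Phi>. \<alpha> \<bullet> \<alpha> = 2)"

definition simple_system :: "'a::euclidean_space set \<Rightarrow> 'a set \<Rightarrow> bool" where
  "simple_system \<Phi> \<Delta> \<longleftrightarrow> \<Delta> \<subseteq> \<Phi> \<and> independent \<Delta>
     \<and> (\<forall>\<beta>\<in>\<Phi>. \<exists>c. (\<forall>\<gamma>\<in>\<Delta>. c \<gamma> \<in> \<int>) \<and> \<beta> = (\<Sum>\<gamma>\<in>\<Delta>. c \<gamma> *\<^sub>R \<gamma>)
                     \<and> ((\<forall>\<gamma>\<in>\<Delta>. c \<gamma> \<ge> 0) \<or> (\<forall>\<gamma>\<in>\<Delta>. c \<gamma> \<le> 0)))"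

definition pos_roots :: "'a::euclidean_space set \<Rightarrow> 'a set \<Rightarrow> 'a set" where
  "pos_roots \<Phi> \<Delta> = {\<beta>\<in>\<Phi>. \<exists>c. (\<forall>\<gamma>\<in>\<Delta>. c \<gamma> \<ge> 0) \<and> \<beta> = (\<Sum>\<gamma>\<in>\<Delta>. c \<gamma> *\<^sub>R \<gamma>)}"

definition neg_roots :: "'a::euclidean_space set \<Rightarrow> 'a set \<Rightarrow> 'a set" where
  "neg_roots \<Phi> \<Delta> = uminus ` pos_roots \<Phi> \<Delta>"

definition refl_prod :: "'a::real_inner list \<Rightarrow> 'a \<Rightarrow> 'a" where
  "refl_prod xs = foldr (\<circ>) (map refl xs) id"

text \<open>Weyl group: the group generated by the reflections \<open>\<sigma>\<^sub>\<alpha>\<close>, \<open>\<alpha> \<in> \<Phi>\<close>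
  (reflections are involutions, so finite products suffice).\<close>
definition weyl_group :: "'a::euclidean_space set \<Rightarrow> ('a \<Rightarrow> 'a) set" where
  "weyl_group \<Phi> = {refl_prod xs | xs. set xs \<subseteq> \<Phi>}"

definition weyl_length :: "'a::euclidean_space set \<Rightarrow> ('a \<Rightarrow> 'a) \<Rightarrow> nat" where
  "weyl_length \<Delta> w = (LEAST n. \<exists>xs. set xs \<subseteq> \<Delta> \<and> length xs = n \<and> w = refl_prod xs)"

end

theory Submission
  imports Defs
begin

text \<open>
  Write \<open>N(w) = \<Phi>\<^sup>+ \<inter> w\<Phi>\<^sup>-\<close>. Via the exchange property, \<open>\<ell>(w) = |N(w)|\<close>, so the
  hypothesis says \<open>|N(\<sigma>\<^sub>\<alpha>w)| = |N(w)| - 1\<close>. A positive root \<open>g\<close> lies in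
  \<open>N(\<sigma>\<^sub>\<alpha>w)\<close> iff \<open>\<sigma>\<^sub>\<alpha>g = g - (g,\<alpha>)\<alpha> \<in> w\<Phi>\<^sup>-\<close>, and \<open>w\<Phi>\<^sup>-\<close> contains exactly one of
  \<open>\<pm>g\<close> and is closed under sums that are roots. If \<open>N(w)\<close> contained both \<open>\<beta>\<close> and
  \<open>\<alpha> - \<beta>\<close> with \<open>(\<beta>,\<alpha>) = 1\<close>, then \<open>g \<mapsto> g + \<alpha>\<close> (applied when \<open>(g,\<alpha>) = -1\<close> and
  \<open>g \<notin> N(w)\<close>) would inject \<open>N(\<sigma>\<^sub>\<alpha>w)\<close> into \<open>N(w) - {\<alpha>, \<beta>, \<alpha> - \<beta>}\<close>, which is too
  small. Without such pairs \<open>\<psi>\<close> injects \<open>N(w) - {\<alpha>}\<close> into \<open>N(\<sigma>\<^sub>\<alpha>w)\<close>, and the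
  cardinalities agree. If \<open>w\<^sup>-\<^sup>1\<alpha> = -d\<close> with \<open>d\<close> simple, the shifted case of \<open>\<psi>\<close>
  never occurs: for \<open>\<beta> = wx\<close> it would make both \<open>x + d\<close> and \<open>\<sigma>\<^sub>d(-x) = -(x + d)\<close>
  positive.
\<close>

lemma inj_on_if_then_else:
  assumes "inj_on f {x \<in> S. C x}"
    and "\<And>x y. x \<in> S \<Longrightarrow> y \<in> S \<Longrightarrow> C x \<Longrightarrow> \<not> C y \<Longrightarrow> f x \<noteq> y"
  shows "inj_on (\<lambda>x. if C x then f x else x) S"
  using assms unfolding inj_on_def by (metis (mono_tags, lifting) mem_Collect_eq)

section \<open>Reflections\<close>

lemma refl_refl: "(a::'a::real_inner) \<bullet> a \<noteq> 0 \<Longrightarrow> refl a (refl a v) = v"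
  unfolding refl_def by (simp add: algebra_simps)

lemma inner_refl_refl: "(a::'a::real_inner) \<bullet> a \<noteq> 0 \<Longrightarrow> refl a u \<bullet> refl a v = u \<bullet> v"
  unfolding refl_def by (simp add: algebra_simps inner_commute)

lemma inner_refl_adjoint: "(a::'a::real_inner) \<bullet> a \<noteq> 0 \<Longrightarrow> refl a u \<bullet> v = u \<bullet> refl a v"
  unfolding refl_def by (simp add: algebra_simps inner_commute)

lemma refl_self: "(a::'a::real_inner) \<bullet> a \<noteq> 0 \<Longrightarrow> refl a a = - a"
  unfolding refl_def by (simp add: algebra_simps scaleR_2)

lemma refl_uminus: "refl (- a) = refl (a::'a::real_inner)"
  by (rule ext) (simp add: refl_def)

lemma linear_refl: "linear (refl (a::'a::real_inner))"
  unfolding refl_def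
  by (rule linearI) (simp_all add: algebra_simps add_divide_distrib)

lemma bij_refl: "(a::'a::real_inner) \<bullet> a \<noteq> 0 \<Longrightarrow> bij (refl a)"
  unfolding bij_def inj_def surj_def by (metis refl_refl)

lemma mem_image_refl_iff:
  assumes "(a::'a::real_inner) \<bullet> a \<noteq> 0"
  shows "g \<in> refl a ` S \<longleftrightarrow> refl a g \<in> S"
  using refl_refl[OF assms] by (metis image_iff)

lemma refl_refl_eq_conj:
  assumes "(a::'a::real_inner) \<bullet> a \<noteq> 0"
  shows "refl (refl a g) = refl a \<circ> refl g \<circ> refl a"
proof
  fix v
  have "(refl a \<circ> refl g \<circ> refl a) v
      = refl a (refl a v) - (2 * (refl a v \<bullet> g) / (g \<bullet> g)) *\<^sub>R refl a g"
    by (simp add: refl_def[of g] linear_diff[OF linear_refl] linear_scale[OF linear_refl])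
  also have "\<dots> = v - (2 * (v \<bullet> refl a g) / (refl a g \<bullet> refl a g)) *\<^sub>R refl a g"
    using assms by (simp add: refl_refl inner_refl_refl inner_refl_adjoint)
  finally show "refl (refl a g) v = (refl a \<circ> refl g \<circ> refl a) v"
    by (simp add: refl_def)
qed

lemma refl_prod_Nil [simp]: "refl_prod [] = id"
  by (simp add: refl_prod_def)

lemma refl_prod_Cons [simp]: "refl_prod (x # xs) = refl x \<circ> refl_prod xs"
  by (simp add: refl_prod_def)

lemma refl_prod_append: "refl_prod (xs @ ys) = refl_prod xs \<circ> refl_prod ys"
  by (induction xs) auto

lemma linear_refl_prod: "linear (refl_prod xs)"
proof (induction xs)
  case Nil
  show ?case using linear_id by (simp add: id_def)
next
  case (Cons x xs)
  show ?case using linear_compose[OF Cons linear_refl] by (simp add: comp_def)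
qed

section \<open>Simply laced root systems\<close>

locale simply_laced =
  fixes \<Phi> \<Delta> :: "'a::euclidean_space set"
  assumes simply_laced_root_system: "simply_laced_root_system \<Phi>"
    and simple_system: "simple_system \<Phi> \<Delta>"
begin

abbreviation Pos :: "'a set" where "Pos \<equiv> pos_roots \<Phi> \<Delta>"
abbreviation Neg :: "'a set" where "Neg \<equiv> neg_roots \<Phi> \<Delta>"

lemma finite_roots: "finite \<Phi>"
  using simply_laced_root_system by (simp add: simply_laced_root_system_def root_system_def)

lemma zero_notin_roots: "0 \<notin> \<Phi>"
  using simply_laced_root_system by (simp add: simply_laced_root_system_def root_system_def)

lemma refl_image_roots: "a \<in> \<Phi> \<Longrightarrow> refl a ` \<Phi> = \<Phi>"
  using simply_laced_root_system by (simp add: simply_laced_root_system_def root_system_def)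

lemma scaleR_root_in_roots: "a \<in> \<Phi> \<Longrightarrow> c *\<^sub>R a \<in> \<Phi> \<Longrightarrow> c = 1 \<or> c = -1"
  using simply_laced_root_system by (simp add: simply_laced_root_system_def root_system_def)

lemma inner_root_self: "a \<in> \<Phi> \<Longrightarrow> a \<bullet> a = 2"
  using simply_laced_root_system by (simp add: simply_laced_root_system_def)

lemma inner_root_self_nonzero: "a \<in> \<Phi> \<Longrightarrow> a \<bullet> a \<noteq> 0"
  using inner_root_self by simp

lemma inner_roots_Ints: "a \<in> \<Phi> \<Longrightarrow> b \<in> \<Phi> \<Longrightarrow> b \<bullet> a \<in> \<int>"
  using simply_laced_root_system inner_root_self[of a]
  unfolding simply_laced_root_system_def root_system_def by force

lemma refl_root: "a \<in> \<Phi> \<Longrightarrow> refl a v = v - (v \<bullet> a) *\<^sub>R a"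
  by (simp add: refl_def inner_root_self)

lemma refl_in_roots: "a \<in> \<Phi> \<Longrightarrow> b \<in> \<Phi> \<Longrightarrow> refl a b \<in> \<Phi>"
  using refl_image_roots by blast

lemma uminus_in_roots: "a \<in> \<Phi> \<Longrightarrow> - a \<in> \<Phi>"
  using refl_in_roots[of a a] refl_self[OF inner_root_self_nonzero] by simp

lemma simple_subset_roots: "\<Delta> \<subseteq> \<Phi>"
  using simple_system by (simp add: simple_system_def)

lemma finite_simple: "finite \<Delta>"
  using simple_subset_roots finite_roots finite_subset by blast

lemma root_simple_expansion:
  "b \<in> \<Phi> \<Longrightarrow> \<exists>c. b = (\<Sum>\<gamma>\<in>\<Delta>. c \<gamma> *\<^sub>R \<gamma>) \<and> ((\<forall>\<gamma>\<in>\<Delta>. c \<gamma> \<ge> 0) \<or> (\<forall>\<gamma>\<in>\<Delta>. c \<gamma> \<le> 0))"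
  using simple_system unfolding simple_system_def by blast

lemma simple_expansion_zero: "(\<Sum>\<gamma>\<in>\<Delta>. e \<gamma> *\<^sub>R \<gamma>) = 0 \<Longrightarrow> g \<in> \<Delta> \<Longrightarrow> e g = 0"
  using simple_system independent_explicit unfolding simple_system_def by blast

lemma pos_rootsI: "b \<in> \<Phi> \<Longrightarrow> \<forall>\<gamma>\<in>\<Delta>. c \<gamma> \<ge> 0 \<Longrightarrow> b = (\<Sum>\<gamma>\<in>\<Delta>. c \<gamma> *\<^sub>R \<gamma>) \<Longrightarrow> b \<in> Pos"
  unfolding pos_roots_def by blast

lemma pos_root_in_roots: "b \<in> Pos \<Longrightarrow> b \<in> \<Phi>"
  by (simp add: pos_roots_def)

lemma neg_roots_iff: "b \<in> Neg \<longleftrightarrow> b \<in> \<Phi> \<and> - b \<in> Pos"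
  unfolding neg_roots_def using pos_root_in_roots uminus_in_roots
  by (metis (no_types, lifting) image_iff minus_minus)

definition height :: "'a \<Rightarrow> real" where
  "height = (SOME h. linear h \<and> (\<forall>d\<in>\<Delta>. h d = 1))"

lemma linear_height: "linear height" and height_simple: "d \<in> \<Delta> \<Longrightarrow> height d = 1"
proof -
  have "\<exists>h. linear h \<and> (\<forall>d\<in>\<Delta>. h d = (1::real))"
    using simple_system linear_independent_extend[of \<Delta> "\<lambda>_. 1::real"]
    unfolding simple_system_def by auto
  then have "linear height \<and> (\<forall>d\<in>\<Delta>. height d = 1)"
    unfolding height_def by (rule someI_ex)
  then show "linear height" "d \<in> \<Delta> \<Longrightarrow> height d = 1" by auto
qed

lemma height_simple_expansion: "height (\<Sum>\<gamma>\<in>\<Delta>. c \<gamma> *\<^sub>R \<gamma>) = (\<Sum>\<gamma>\<in>\<Delta>. c \<gamma>)"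
  by (simp add: linear_sum[OF linear_height] linear_scale[OF linear_height] height_simple)

lemma height_pos_root_nonneg: "b \<in> Pos \<Longrightarrow> height b \<ge> 0"
  unfolding pos_roots_def using height_simple_expansion by (auto intro!: sum_nonneg)

lemma uminus_pos_root_notin: "b \<in> Pos \<Longrightarrow> - b \<notin> Pos"
proof
  assume b: "b \<in> Pos" and nb: "- b \<in> Pos"
  then obtain c where c: "\<forall>\<gamma>\<in>\<Delta>. c \<gamma> \<ge> 0" "b = (\<Sum>\<gamma>\<in>\<Delta>. c \<gamma> *\<^sub>R \<gamma>)"
    unfolding pos_roots_def by blast
  have "height (- b) = - height b"
    using linear_neg[OF linear_height] by simp
  with height_pos_root_nonneg[OF b] height_pos_root_nonneg[OF nb] have "(\<Sum>\<gamma>\<in>\<Delta>. c \<gamma>) = 0"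
    using c height_simple_expansion by simp
  then have "\<forall>\<gamma>\<in>\<Delta>. c \<gamma> = 0"
    using sum_nonneg_eq_0_iff[OF finite_simple] c(1) by blast
  then show False
    using b c(2) pos_root_in_roots zero_notin_roots by simp
qed

lemma root_pos_or_neg: "b \<in> \<Phi> \<Longrightarrow> b \<in> Pos \<or> - b \<in> Pos"
proof -
  assume b: "b \<in> \<Phi>"
  from root_simple_expansion[OF b] obtain c where
    c: "b = (\<Sum>\<gamma>\<in>\<Delta>. c \<gamma> *\<^sub>R \<gamma>)" "(\<forall>\<gamma>\<in>\<Delta>. c \<gamma> \<ge> 0) \<or> (\<forall>\<gamma>\<in>\<Delta>. c \<gamma> \<le> 0)"
    by blast
  show ?thesis
  proof (cases "\<forall>\<gamma>\<in>\<Delta>. c \<gamma> \<ge> 0")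
    case True
    then show ?thesis
      using pos_rootsI[OF b True c(1)] by simp
  next
    case False
    then have "\<forall>\<gamma>\<in>\<Delta>. - c \<gamma> \<ge> 0"
      using c(2) by auto
    moreover have "- b = (\<Sum>\<gamma>\<in>\<Delta>. (- c \<gamma>) *\<^sub>R \<gamma>)"
      using c(1) by (simp add: sum_negf)
    ultimately have "- b \<in> Pos"
      by (rule pos_rootsI[OF uminus_in_roots[OF b]])
    then show ?thesis ..
  qed
qed

lemma simple_in_pos_roots: "d \<in> \<Delta> \<Longrightarrow> d \<in> Pos"
proof (rule pos_rootsI[where c = "\<lambda>\<gamma>. if \<gamma> = d then 1 else 0"])
  assume d: "d \<in> \<Delta>"
  then show "d \<in> \<Phi>"
    using simple_subset_roots by blast
  show "\<forall>\<gamma>\<in>\<Delta>. 0 \<le> (if \<gamma> = d then 1 else (0::real))"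
    by simp
  have "(\<Sum>\<gamma>\<in>\<Delta>. (if \<gamma> = d then 1 else 0) *\<^sub>R \<gamma>) = (\<Sum>\<gamma>\<in>\<Delta>. if \<gamma> = d then d else 0)"
    by (rule sum.cong) auto
  also have "\<dots> = d"
    using d finite_simple by simp
  finally show "d = (\<Sum>\<gamma>\<in>\<Delta>. (if \<gamma> = d then 1 else 0) *\<^sub>R \<gamma>)"
    by simp
qed

lemma pos_roots_add: "a \<in> Pos \<Longrightarrow> b \<in> Pos \<Longrightarrow> a + b \<in> \<Phi> \<Longrightarrow> a + b \<in> Pos"
proof -
  assume a: "a \<in> Pos" and b: "b \<in> Pos" and ab: "a + b \<in> \<Phi>"
  obtain c where c: "\<forall>\<gamma>\<in>\<Delta>. c \<gamma> \<ge> 0" "a = (\<Sum>\<gamma>\<in>\<Delta>. c \<gamma> *\<^sub>R \<gamma>)"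
    using a unfolding pos_roots_def by blast
  obtain e where e: "\<forall>\<gamma>\<in>\<Delta>. e \<gamma> \<ge> 0" "b = (\<Sum>\<gamma>\<in>\<Delta>. e \<gamma> *\<^sub>R \<gamma>)"
    using b unfolding pos_roots_def by blast
  have "a + b = (\<Sum>\<gamma>\<in>\<Delta>. (c \<gamma> + e \<gamma>) *\<^sub>R \<gamma>)"
    using c(2) e(2) by (simp add: scaleR_add_left sum.distrib)
  then show ?thesis
    using pos_rootsI[OF ab] c(1) e(1) by simp
qed

lemma inner_roots_cases:
  assumes "a \<in> \<Phi>" "b \<in> \<Phi>"
  shows "b = a \<or> b = - a \<or> b \<bullet> a = -1 \<or> b \<bullet> a = 0 \<or> b \<bullet> a = 1"
proof -
  obtain k :: int where k: "b \<bullet> a = of_int k"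
    using inner_roots_Ints[OF assms] Ints_cases by metis
  have minus: "(b - a) \<bullet> (b - a) = 4 - 2 * (b \<bullet> a)" and plus: "(b + a) \<bullet> (b + a) = 4 + 2 * (b \<bullet> a)"
    using inner_root_self[OF assms(1)] inner_root_self[OF assms(2)]
    by (simp_all add: inner_diff_left inner_diff_right inner_add_left inner_add_right inner_commute)
  have "0 \<le> (b - a) \<bullet> (b - a)" "0 \<le> (b + a) \<bullet> (b + a)"
    by simp_all
  then have "-2 \<le> k" "k \<le> 2"
    unfolding minus plus k by linarith+
  then consider "k = -2" | "k = -1" | "k = 0" | "k = 1" | "k = 2"
    by linarith
  then show ?thesis
  proof cases
    case 1
    then have "(b + a) \<bullet> (b + a) = 0"
      using plus k by simp
    then show ?thesis
      by (simp add: eq_neg_iff_add_eq_0)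
  next
    case 5
    then have "(b - a) \<bullet> (b - a) = 0"
      using minus k by simp
    then show ?thesis
      by simp
  qed (use k in simp_all)
qed

lemma inner_pos_roots_cases:
  assumes "a \<in> Pos" "b \<in> Pos" "b \<noteq> a"
  shows "b \<bullet> a = -1 \<or> b \<bullet> a = 0 \<or> b \<bullet> a = 1"
  using inner_roots_cases[OF pos_root_in_roots pos_root_in_roots, OF assms(1,2)] assms
    uminus_pos_root_notin by auto

lemma simple_expansion_unique:
  assumes "(\<Sum>\<gamma>\<in>\<Delta>. c \<gamma> *\<^sub>R \<gamma>) = (\<Sum>\<gamma>\<in>\<Delta>. e \<gamma> *\<^sub>R \<gamma>)" "g \<in> \<Delta>"
  shows "c g = e g"
proof -
  have "(\<Sum>\<gamma>\<in>\<Delta>. (c \<gamma> - e \<gamma>) *\<^sub>R \<gamma>) = 0"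
    using assms(1) by (simp add: scaleR_diff_left sum_subtractf)
  then show ?thesis
    using simple_expansion_zero[OF _ assms(2)] by force
qed

lemma simple_refl_pos_roots:
  assumes d: "d \<in> \<Delta>" and b: "b \<in> Pos" and "b \<noteq> d"
  shows "refl d b \<in> Pos"
proof (rule ccontr)
  assume "refl d b \<notin> Pos"
  have dP: "d \<in> \<Phi>" and bP: "b \<in> \<Phi>"
    using d simple_subset_roots b pos_root_in_roots by auto
  have "- refl d b \<in> Pos"
    using root_pos_or_neg[OF refl_in_roots[OF dP bP]] \<open>refl d b \<notin> Pos\<close> by blast
  then obtain e where e: "\<forall>\<gamma>\<in>\<Delta>. e \<gamma> \<ge> 0" "- refl d b = (\<Sum>\<gamma>\<in>\<Delta>. e \<gamma> *\<^sub>R \<gamma>)"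
    unfolding pos_roots_def by blast
  obtain c where c: "\<forall>\<gamma>\<in>\<Delta>. c \<gamma> \<ge> 0" "b = (\<Sum>\<gamma>\<in>\<Delta>. c \<gamma> *\<^sub>R \<gamma>)"
    using b unfolding pos_roots_def by blast
  have "(\<Sum>\<gamma>\<in>\<Delta>. (if \<gamma> = d then b \<bullet> d else 0) *\<^sub>R \<gamma>) = (\<Sum>\<gamma>\<in>\<Delta>. if \<gamma> = d then (b \<bullet> d) *\<^sub>R d else 0)"
    by (rule sum.cong) auto
  also have "\<dots> = (b \<bullet> d) *\<^sub>R d"
    using d finite_simple by simp
  finally have "- refl d b = (\<Sum>\<gamma>\<in>\<Delta>. ((if \<gamma> = d then b \<bullet> d else 0) - c \<gamma>) *\<^sub>R \<gamma>)"
    using refl_root[OF dP, of b] c(2) by (simp add: scaleR_diff_left sum_subtractf)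
  then have "c \<gamma> = 0" if "\<gamma> \<in> \<Delta>" "\<gamma> \<noteq> d" for \<gamma>
    using simple_expansion_unique[OF _ that(1), of e] e that c(1) by force
  then have "(\<Sum>\<gamma>\<in>\<Delta> - {d}. c \<gamma> *\<^sub>R \<gamma>) = 0"
    by (intro sum.neutral) auto
  then have "b = c d *\<^sub>R d"
    using c(2) sum.remove[OF finite_simple d, of "\<lambda>\<gamma>. c \<gamma> *\<^sub>R \<gamma>"] by simp
  then have "c d = 1 \<or> c d = -1"
    using scaleR_root_in_roots[OF dP] bP by simp
  then have "b = d \<or> b = - d"
    using \<open>b = c d *\<^sub>R d\<close> by auto
  then show False
    using \<open>b \<noteq> d\<close> uminus_pos_root_notin[OF b] simple_in_pos_roots[OF d] by auto
qed

section \<open>The Weyl group and inversion sets\<close>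

lemma refl_prod_image_roots: "set xs \<subseteq> \<Phi> \<Longrightarrow> refl_prod xs ` \<Phi> = \<Phi>"
proof (induction xs)
  case (Cons x xs)
  then show ?case
    using refl_image_roots[of x] unfolding refl_prod_Cons image_comp[symmetric] by simp
qed simp

lemma bij_refl_prod: "set xs \<subseteq> \<Phi> \<Longrightarrow> bij (refl_prod xs)"
proof (induction xs)
  case (Cons x xs)
  then show ?case
    unfolding refl_prod_Cons by (intro bij_comp bij_refl inner_root_self_nonzero) simp_all
qed simp

lemma inner_refl_prod: "set xs \<subseteq> \<Phi> \<Longrightarrow> refl_prod xs u \<bullet> refl_prod xs v = u \<bullet> v"
proof (induction xs)
  case (Cons x xs)
  then show ?case
    using inner_refl_refl[OF inner_root_self_nonzero, of x] by simp
qed simp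

lemma weyl_groupE:
  assumes "w \<in> weyl_group \<Phi>"
  obtains xs where "set xs \<subseteq> \<Phi>" "w = refl_prod xs"
  using assms unfolding weyl_group_def by blast

lemma refl_comp_weyl_group: "a \<in> \<Phi> \<Longrightarrow> w \<in> weyl_group \<Phi> \<Longrightarrow> refl a \<circ> w \<in> weyl_group \<Phi>"
  by (elim weyl_groupE) (auto simp: weyl_group_def intro!: exI[of _ "a # xs" for xs])

lemma weyl_group_image_roots: "w \<in> weyl_group \<Phi> \<Longrightarrow> w ` \<Phi> = \<Phi>"
  by (elim weyl_groupE) (simp add: refl_prod_image_roots)

lemma weyl_group_bij: "w \<in> weyl_group \<Phi> \<Longrightarrow> bij w"
  by (elim weyl_groupE) (simp add: bij_refl_prod)

lemma weyl_group_linear: "w \<in> weyl_group \<Phi> \<Longrightarrow> linear w"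
  by (elim weyl_groupE) (simp add: linear_refl_prod)

lemma weyl_group_inner: "w \<in> weyl_group \<Phi> \<Longrightarrow> w u \<bullet> w v = u \<bullet> v"
  by (elim weyl_groupE) (simp add: inner_refl_prod)

lemma weyl_group_root_preimage:
  assumes "w \<in> weyl_group \<Phi>" "w x \<in> \<Phi>"
  shows "x \<in> \<Phi>"
proof -
  have "inj w"
    using weyl_group_bij[OF assms(1)] bij_is_inj by blast
  then show ?thesis
    using assms(2) weyl_group_image_roots[OF assms(1)] by (metis inj_image_mem_iff)
qed

lemma weyl_uminus_mem_image_neg_iff:
  assumes w: "w \<in> weyl_group \<Phi>" and g: "g \<in> \<Phi>"
  shows "- g \<in> w ` Neg \<longleftrightarrow> g \<notin> w ` Neg"
proof -
  obtain x where x: "x \<in> \<Phi>" "g = w x"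
    using g weyl_group_image_roots[OF w] by blast
  have "- g = w (- x)"
    using x(2) linear_neg[OF weyl_group_linear[OF w]] by simp
  moreover have "inj w"
    using weyl_group_bij[OF w] bij_is_inj by blast
  ultimately have "- g \<in> w ` Neg \<longleftrightarrow> x \<in> Pos" and "g \<in> w ` Neg \<longleftrightarrow> - x \<in> Pos"
    using x uminus_in_roots by (auto simp: inj_image_mem_iff neg_roots_iff)
  then show ?thesis
    using root_pos_or_neg[OF x(1)] uminus_pos_root_notin by auto
qed

lemma weyl_add_mem_image_neg:
  assumes w: "w \<in> weyl_group \<Phi>"
    and "a \<in> w ` Neg" "b \<in> w ` Neg" "a + b \<in> \<Phi>"
  shows "a + b \<in> w ` Neg"
proof -
  obtain x y where xy: "x \<in> Neg" "y \<in> Neg" "a = w x" "b = w y"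
    using assms(2,3) by blast
  have "a + b = w (x + y)"
    using xy linear_add[OF weyl_group_linear[OF w]] by simp
  then have "x + y \<in> \<Phi>"
    using weyl_group_root_preimage[OF w] assms(4) by simp
  then have "x + y \<in> Neg"
    using xy(1,2) pos_roots_add[of "- x" "- y"] uminus_in_roots[of "x + y"]
    by (simp add: neg_roots_iff)
  then show ?thesis
    using \<open>a + b = w (x + y)\<close> by blast
qed

definition inversions :: "('a \<Rightarrow> 'a) \<Rightarrow> 'a set" where
  "inversions w = Pos \<inter> w ` Neg"

lemma finite_inversions: "finite (inversions w)"
  unfolding inversions_def using finite_roots pos_root_in_roots
  by (meson Int_lower1 finite_subset subsetI)

lemma inversions_id: "inversions id = {}"
  unfolding inversions_def using neg_roots_iff uminus_pos_root_notin by auto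

lemma inversionsD:
  assumes "g \<in> inversions w"
  shows "g \<in> Pos" "g \<in> \<Phi>" "g \<in> w ` Neg"
  using assms pos_root_in_roots by (auto simp: inversions_def)

lemma inversions_refl_comp_iff:
  assumes "a \<in> \<Phi>"
  shows "g \<in> inversions (refl a \<circ> w) \<longleftrightarrow> g \<in> Pos \<and> refl a g \<in> w ` Neg"
  unfolding inversions_def image_comp[symmetric]
  using mem_image_refl_iff[OF inner_root_self_nonzero[OF assms]] by simp

section \<open>Length equals the number of inversions\<close>

lemma inversions_refl_prod_exchange:
  assumes "set xs \<subseteq> \<Delta>" "g \<in> inversions (refl_prod xs)"
  shows "\<exists>ys. set ys \<subseteq> \<Delta> \<and> length ys < length xs \<and> refl g \<circ> refl_prod xs = refl_prod ys"
  using assms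
proof (induction xs arbitrary: g)
  case Nil
  then show ?case
    using inversions_id by (simp add: id_def)
next
  case (Cons x xs)
  have x: "x \<in> \<Delta>" and xs: "set xs \<subseteq> \<Delta>"
    using Cons.prems(1) by auto
  have xP: "x \<in> \<Phi>"
    using x simple_subset_roots by auto
  have xx: "\<And>v. refl x (refl x v) = v"
    using refl_refl[OF inner_root_self_nonzero[OF xP]] .
  have "g \<in> inversions (refl x \<circ> refl_prod xs)"
    using Cons.prems(2) by (simp only: refl_prod_Cons)
  then have g: "g \<in> Pos" "refl x g \<in> refl_prod xs ` Neg"
    using inversions_refl_comp_iff[OF xP] by blast+
  show ?case
  proof (cases "g = x")
    case True
    then have "refl g \<circ> refl_prod (x # xs) = refl_prod xs"
      using xx by (simp add: fun_eq_iff)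
    then show ?thesis
      using xs by (metis length_Cons lessI)
  next
    case False
    then have "refl x g \<in> inversions (refl_prod xs)"
      using simple_refl_pos_roots[OF x g(1)] g(2) by (simp add: inversions_def)
    then obtain ys where ys: "set ys \<subseteq> \<Delta>" "length ys < length xs"
      "refl (refl x g) \<circ> refl_prod xs = refl_prod ys"
      using Cons.IH[OF xs] by blast
    have "refl g = refl x \<circ> refl (refl x g) \<circ> refl x"
      using refl_refl_eq_conj[OF inner_root_self_nonzero[OF xP], of "refl x g"] xx by simp
    then have "refl g \<circ> refl_prod (x # xs) = refl x \<circ> (refl (refl x g) \<circ> refl_prod xs)"
      using xx by (simp add: fun_eq_iff)
    then have "refl g \<circ> refl_prod (x # xs) = refl_prod (x # ys)"
      using ys(3) by simp
    moreover have "set (x # ys) \<subseteq> \<Delta>" "length (x # ys) < length (x # xs)"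
      using x ys by auto
    ultimately show ?thesis
      by blast
  qed
qed

lemma inversions_simple_refl_comp:
  assumes w: "w \<in> weyl_group \<Phi>" and d: "d \<in> \<Delta>" and d_notin: "d \<notin> inversions w"
  shows "inversions (refl d \<circ> w) = insert d (refl d ` inversions w)"
proof -
  have dP: "d \<in> \<Phi>"
    using d simple_subset_roots by auto
  have dd: "\<And>v. refl d (refl d v) = v"
    using refl_refl[OF inner_root_self_nonzero[OF dP]] .
  have "d \<notin> w ` Neg"
    using d_notin simple_in_pos_roots[OF d] by (simp add: inversions_def)
  then have d_in: "d \<in> inversions (refl d \<circ> w)"
    using inversions_refl_comp_iff[OF dP] refl_self[OF inner_root_self_nonzero[OF dP]]
      weyl_uminus_mem_image_neg_iff[OF w dP] simple_in_pos_roots[OF d] by simp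
  have other: "g \<in> inversions (refl d \<circ> w) \<longleftrightarrow> g \<in> refl d ` inversions w" if "g \<noteq> d" for g
  proof
    assume "g \<in> inversions (refl d \<circ> w)"
    then have "refl d g \<in> inversions w"
      using inversions_refl_comp_iff[OF dP] simple_refl_pos_roots[OF d _ that]
      by (simp add: inversions_def)
    then show "g \<in> refl d ` inversions w"
      using dd by (metis image_eqI)
  next
    assume "g \<in> refl d ` inversions w"
    then have g: "refl d g \<in> inversions w"
      using dd by auto
    then have "refl d g \<noteq> d"
      using d_notin by auto
    then have "g \<in> Pos"
      using simple_refl_pos_roots[OF d, of "refl d g"] g dd by (simp add: inversions_def)
    moreover have "refl d g \<in> w ` Neg"
      using g by (simp add: inversions_def)
    ultimately show "g \<in> inversions (refl d \<circ> w)"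
      using inversions_refl_comp_iff[OF dP] by blast
  qed
  show ?thesis
  proof (rule set_eqI)
    fix g
    show "g \<in> inversions (refl d \<circ> w) \<longleftrightarrow> g \<in> insert d (refl d ` inversions w)"
      using d_in other[of g] by (cases "g = d") simp_all
  qed
qed

lemma card_inversions_simple_refl_comp:
  assumes w: "w \<in> weyl_group \<Phi>" and d: "d \<in> \<Delta>" and "d \<notin> inversions w"
  shows "card (inversions (refl d \<circ> w)) = Suc (card (inversions w))"
proof -
  have dP: "d \<in> \<Phi>"
    using d simple_subset_roots by auto
  have "d \<notin> refl d ` inversions w"
  proof
    assume "d \<in> refl d ` inversions w"
    then have "refl d d \<in> inversions w"
      using refl_refl[OF inner_root_self_nonzero[OF dP]] by (metis image_iff)
    then show False
      using refl_self[OF inner_root_self_nonzero[OF dP]]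
        uminus_pos_root_notin[OF simple_in_pos_roots[OF d]] by (simp add: inversions_def)
  qed
  moreover have "inj_on (refl d) (inversions w)"
    using bij_refl[OF inner_root_self_nonzero[OF dP]] bij_is_inj inj_on_subset by blast
  ultimately show ?thesis
    using inversions_simple_refl_comp[OF assms] finite_inversions by (simp add: card_image)
qed

lemma card_inversions_refl_prod_or_shorter:
  assumes "set xs \<subseteq> \<Delta>"
  shows "card (inversions (refl_prod xs)) = length xs
    \<or> (\<exists>ys. set ys \<subseteq> \<Delta> \<and> length ys < length xs \<and> refl_prod ys = refl_prod xs)"
  using assms
proof (induction xs)
  case Nil
  then show ?case
    using inversions_id by (simp add: id_def)
next
  case (Cons x xs)
  have x: "x \<in> \<Delta>" and xs: "set xs \<subseteq> \<Delta>"
    using Cons.prems by auto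
  have xsW: "refl_prod xs \<in> weyl_group \<Phi>"
    using xs simple_subset_roots unfolding weyl_group_def by blast
  consider "card (inversions (refl_prod xs)) = length xs" "x \<notin> inversions (refl_prod xs)"
    | "x \<in> inversions (refl_prod xs)"
    | "\<exists>ys. set ys \<subseteq> \<Delta> \<and> length ys < length xs \<and> refl_prod ys = refl_prod xs"
    using Cons.IH[OF xs] by blast
  then show ?case
  proof cases
    case 1
    then have "card (inversions (refl_prod (x # xs))) = length (x # xs)"
      using card_inversions_simple_refl_comp[OF xsW x] by simp
    then show ?thesis ..
  next
    case 2
    then show ?thesis
      using inversions_refl_prod_exchange[OF xs] by fastforce
  next
    case 3
    then obtain ys where "set ys \<subseteq> \<Delta>" "length ys < length xs" "refl_prod ys = refl_prod xs"
      by blast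
    then show ?thesis
      using x by (intro disjI2 exI[of _ "x # ys"]) auto
  qed
qed

lemma refl_pos_root_simple_word:
  "b \<in> Pos \<Longrightarrow> \<exists>ys. set ys \<subseteq> \<Delta> \<and> refl b = refl_prod ys"
proof (induction "nat \<lfloor>height b\<rfloor>" arbitrary: b rule: less_induct)
  case less
  have bP: "b \<in> \<Phi>"
    using less.prems pos_root_in_roots by blast
  obtain c where c: "\<forall>\<gamma>\<in>\<Delta>. c \<gamma> \<ge> 0" "b = (\<Sum>\<gamma>\<in>\<Delta>. c \<gamma> *\<^sub>R \<gamma>)"
    using less.prems unfolding pos_roots_def by blast
  have "(\<Sum>\<gamma>\<in>\<Delta>. c \<gamma> * (b \<bullet> \<gamma>)) = b \<bullet> b"
    using c(2) by (simp add: inner_sum_right)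
  then have "\<not> (\<forall>\<gamma>\<in>\<Delta>. c \<gamma> * (b \<bullet> \<gamma>) \<le> 0)"
    using inner_root_self[OF bP] sum_nonpos[of \<Delta> "\<lambda>\<gamma>. c \<gamma> * (b \<bullet> \<gamma>)"] by auto
  then obtain d where d: "d \<in> \<Delta>" "b \<bullet> d > 0"
    using c(1) by (meson linorder_not_le mult_nonneg_nonpos)
  have dP: "d \<in> \<Phi>"
    using d simple_subset_roots by blast
  show ?case
  proof (cases "b = d")
    case True
    then show ?thesis
      using d by (intro exI[of _ "[d]"]) simp
  next
    case False
    obtain m :: int where m: "b \<bullet> d = of_int m"
      using inner_roots_Ints[OF dP bP] Ints_cases by metis
    let ?b' = "refl d b"
    have b'P: "?b' \<in> Pos"
      by (rule simple_refl_pos_roots[OF d(1) less.prems False])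
    have "height ?b' = height b - of_int m"
      using refl_root[OF dP] m linear_diff[OF linear_height] linear_scale[OF linear_height]
        height_simple[OF d(1)] by simp
    then have "\<lfloor>height ?b'\<rfloor> = \<lfloor>height b\<rfloor> - m"
      by simp
    then have "nat \<lfloor>height ?b'\<rfloor> < nat \<lfloor>height b\<rfloor>"
      using m d(2) height_pos_root_nonneg[OF b'P] by linarith
    then obtain ys where ys: "set ys \<subseteq> \<Delta>" "refl ?b' = refl_prod ys"
      using less.hyps b'P by blast
    have "refl b = refl (refl d ?b')"
      using refl_refl[OF inner_root_self_nonzero[OF dP]] by simp
    also have "\<dots> = refl_prod ([d] @ ys @ [d])"
      using ys(2) refl_refl_eq_conj[OF inner_root_self_nonzero[OF dP]]
      by (simp add: refl_prod_append comp_assoc)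
    finally show ?thesis
      using ys(1) d(1) by (intro exI[of _ "[d] @ ys @ [d]"]) simp
  qed
qed

lemma weyl_group_simple_word:
  assumes "w \<in> weyl_group \<Phi>"
  obtains ys where "set ys \<subseteq> \<Delta>" "w = refl_prod ys"
proof -
  obtain xs where xs: "set xs \<subseteq> \<Phi>" "w = refl_prod xs"
    using assms by (rule weyl_groupE)
  have "\<exists>ys. set ys \<subseteq> \<Delta> \<and> refl_prod xs = refl_prod ys"
    using xs(1)
  proof (induction xs)
    case Nil
    show ?case
      by (rule exI[of _ "[]"]) simp
  next
    case (Cons x xs)
    then obtain ys where ys: "set ys \<subseteq> \<Delta>" "refl_prod xs = refl_prod ys"
      by auto
    have "x \<in> Pos \<or> - x \<in> Pos"
      using Cons.prems root_pos_or_neg by simp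
    then obtain zs where zs: "set zs \<subseteq> \<Delta>" "refl x = refl_prod zs"
      using refl_pos_root_simple_word[of x] refl_pos_root_simple_word[of "- x"] refl_uminus[of x]
      by metis
    have "refl_prod (x # xs) = refl_prod (zs @ ys)"
      unfolding refl_prod_Cons refl_prod_append zs(2) ys(2) ..
    moreover have "set (zs @ ys) \<subseteq> \<Delta>"
      using ys(1) zs(1) by simp
    ultimately show ?case
      by blast
  qed
  then show ?thesis
    using xs that by blast
qed

lemma weyl_length_eq_card_inversions:
  assumes "w \<in> weyl_group \<Phi>"
  shows "weyl_length \<Delta> w = card (inversions w)"
proof -
  define word where "word n \<longleftrightarrow> (\<exists>xs. set xs \<subseteq> \<Delta> \<and> length xs = n \<and> w = refl_prod xs)" for n
  have length_def: "weyl_length \<Delta> w = (LEAST n. word n)"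
    unfolding weyl_length_def word_def ..
  obtain ys where "set ys \<subseteq> \<Delta>" "w = refl_prod ys"
    using assms by (rule weyl_group_simple_word)
  then have "word (length ys)"
    unfolding word_def by blast
  then have "word (weyl_length \<Delta> w)"
    unfolding length_def by (rule LeastI)
  then obtain xs where xs: "set xs \<subseteq> \<Delta>" "length xs = weyl_length \<Delta> w" "w = refl_prod xs"
    unfolding word_def by blast
  have "\<not> (\<exists>ys. set ys \<subseteq> \<Delta> \<and> length ys < length xs \<and> refl_prod ys = refl_prod xs)"
  proof
    assume "\<exists>ys. set ys \<subseteq> \<Delta> \<and> length ys < length xs \<and> refl_prod ys = refl_prod xs"
    then obtain ys where ys: "set ys \<subseteq> \<Delta>" "length ys < length xs" "refl_prod ys = refl_prod xs"
      by blast
    then have "word (length ys)"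
      unfolding word_def using xs(3) by auto
    then have "weyl_length \<Delta> w \<le> length ys"
      unfolding length_def by (rule Least_le)
    then show False
      using ys(2) xs(2) by simp
  qed
  then have "card (inversions (refl_prod xs)) = length xs"
    using card_inversions_refl_prod_or_shorter[OF xs(1)] by blast
  then show ?thesis
    using xs(2,3) by simp
qed

section \<open>Inversions of \<open>\<sigma>\<^sub>\<alpha>w\<close> when the length drops by one\<close>

lemma notin_inversions_refl_comp:
  assumes w: "w \<in> weyl_group \<Phi>" and \<alpha>: "\<alpha> \<in> inversions w"
  shows "\<alpha> \<notin> inversions (refl \<alpha> \<circ> w)"
  using inversionsD[OF \<alpha>] inversions_refl_comp_iff weyl_uminus_mem_image_neg_iff[OF w]
    refl_self[OF inner_root_self_nonzero] by metis

lemma inversions_refl_comp_shift: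
  assumes w: "w \<in> weyl_group \<Phi>" and \<alpha>: "\<alpha> \<in> inversions w"
    and g: "g \<in> inversions (refl \<alpha> \<circ> w)"
  defines "h \<equiv> if g \<bullet> \<alpha> = -1 \<and> g \<notin> inversions w then g + \<alpha> else g"
  shows "h \<in> inversions w - {\<alpha>}" and "h \<bullet> \<alpha> = 1 \<Longrightarrow> \<alpha> - h \<notin> inversions w"
proof -
  note \<alpha>P = inversionsD[OF \<alpha>]
  have \<alpha>\<alpha>: "\<alpha> \<bullet> \<alpha> = 2"
    using inner_root_self[OF \<alpha>P(2)] .
  have gP: "g \<in> Pos" "g \<in> \<Phi>" and sg: "refl \<alpha> g \<in> w ` Neg"
    using g inversions_refl_comp_iff[OF \<alpha>P(2)] pos_root_in_roots by auto
  have s\<Phi>: "refl \<alpha> g \<in> \<Phi>"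
    using refl_in_roots[OF \<alpha>P(2) gP(2)] .
  have "g \<noteq> \<alpha>"
    using g notin_inversions_refl_comp[OF w \<alpha>] by blast
  from inner_pos_roots_cases[OF \<alpha>P(1) gP(1) this]
  have "h \<in> inversions w - {\<alpha>} \<and> (h \<bullet> \<alpha> = 1 \<longrightarrow> \<alpha> - h \<notin> inversions w)"
  proof (elim disjE)
    assume g1: "g \<bullet> \<alpha> = -1"
    then have s: "refl \<alpha> g = g + \<alpha>"
      using refl_root[OF \<alpha>P(2)] by simp
    show ?thesis
    proof (cases "g \<in> inversions w")
      case True
      then show ?thesis
        using g1 \<alpha>\<alpha> by (auto simp: h_def)
    next
      case False
      have "g + \<alpha> \<in> Pos" "g + \<alpha> \<noteq> \<alpha>" "- g \<notin> Pos"
        using pos_roots_add[OF gP(1) \<alpha>P(1)] s s\<Phi> gP zero_notin_roots uminus_pos_root_notin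
        by auto
      then show ?thesis
        using False g1 s sg \<alpha>\<alpha> by (simp add: h_def inversions_def inner_add_left)
    qed
  next
    assume g0: "g \<bullet> \<alpha> = 0"
    then have "refl \<alpha> g = g"
      using refl_root[OF \<alpha>P(2)] by simp
    then show ?thesis
      using g0 sg gP(1) \<alpha>\<alpha> by (auto simp: h_def inversions_def)
  next
    assume g1: "g \<bullet> \<alpha> = 1"
    then have s: "refl \<alpha> g = g - \<alpha>"
      using refl_root[OF \<alpha>P(2)] by simp
    have "g \<in> w ` Neg"
      using weyl_add_mem_image_neg[OF w, of "g - \<alpha>" \<alpha>] sg s \<alpha>P gP by simp
    moreover have "\<alpha> - g \<notin> w ` Neg"
      using weyl_uminus_mem_image_neg_iff[OF w s\<Phi>] sg s by simp
    ultimately show ?thesis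
      using g1 \<alpha>\<alpha> gP(1) by (auto simp: h_def inversions_def)
  qed
  then show "h \<in> inversions w - {\<alpha>}" and "h \<bullet> \<alpha> = 1 \<Longrightarrow> \<alpha> - h \<notin> inversions w"
    by auto
qed

lemma inversions_refl_comp_no_pair:
  assumes w: "w \<in> weyl_group \<Phi>" and \<alpha>: "\<alpha> \<in> inversions w"
    and card: "card (inversions (refl \<alpha> \<circ> w)) = card (inversions w) - 1"
    and \<beta>: "\<beta> \<in> inversions w" "\<beta> \<bullet> \<alpha> = 1"
  shows "\<alpha> - \<beta> \<notin> inversions w"
proof
  assume \<alpha>\<beta>: "\<alpha> - \<beta> \<in> inversions w"
  define B where "B = {\<alpha>, \<beta>, \<alpha> - \<beta>}"
  have \<alpha>\<Phi>: "\<alpha> \<in> \<Phi>" and \<alpha>\<alpha>: "\<alpha> \<bullet> \<alpha> = 2" and \<beta>\<beta>: "\<beta> \<bullet> \<beta> = 2"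
    using inversionsD(2) \<alpha> \<beta>(1) inner_root_self by auto
  have "\<alpha> - \<beta> \<noteq> \<beta>"
  proof
    assume "\<alpha> - \<beta> = \<beta>"
    then have "\<alpha> = 2 *\<^sub>R \<beta>"
      by (simp add: scaleR_2 algebra_simps)
    then show False
      using \<alpha>\<alpha> \<beta>\<beta> by simp
  qed
  moreover have "\<beta> \<noteq> \<alpha>" "\<alpha> - \<beta> \<noteq> \<alpha>"
    using \<alpha>\<alpha> \<beta> by (auto simp: inner_diff_left)
  ultimately have "card B = 3"
    unfolding B_def by auto
  have B: "B \<subseteq> inversions w"
    using \<alpha> \<alpha>\<beta> \<beta> by (simp add: B_def)
  let ?shift = "\<lambda>g. if g \<bullet> \<alpha> = -1 \<and> g \<notin> inversions w then g + \<alpha> else g"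
  have "?shift g \<in> inversions w - B" if "g \<in> inversions (refl \<alpha> \<circ> w)" for g
    using inversions_refl_comp_shift[OF w \<alpha> that] \<alpha>\<beta> \<beta>
    by (auto simp: B_def inner_diff_left \<alpha>\<alpha>)
  moreover have "inj_on ?shift (inversions (refl \<alpha> \<circ> w))"
  proof (rule inj_on_if_then_else)
    fix x y
    assume x: "x \<in> inversions (refl \<alpha> \<circ> w)" "x \<bullet> \<alpha> = -1 \<and> x \<notin> inversions w"
      and y: "y \<in> inversions (refl \<alpha> \<circ> w)"
    have "refl \<alpha> (x + \<alpha>) = x"
      using x(2) refl_root[OF \<alpha>\<Phi>, of "x + \<alpha>"] \<alpha>\<alpha> by (simp add: inner_add_left)
    then show "x + \<alpha> \<noteq> y"
      using x y inversions_refl_comp_iff[OF \<alpha>\<Phi>] by (auto simp: inversions_def)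
  qed (simp add: inj_on_def)
  ultimately have "card (inversions (refl \<alpha> \<circ> w)) \<le> card (inversions w - B)"
    using finite_inversions by (intro card_inj_on_le) auto
  also have "\<dots> = card (inversions w) - 3"
    using card_Diff_subset[OF _ B] finite_subset[OF B finite_inversions] \<open>card B = 3\<close> by simp
  finally show False
    using card card_mono[OF finite_inversions B] \<open>card B = 3\<close> by simp
qed

lemma refl_mem_image_neg_unshifted:
  assumes w: "w \<in> weyl_group \<Phi>" and \<alpha>: "\<alpha> \<in> inversions w"
    and no_pair: "\<And>\<beta>. \<beta> \<in> inversions w \<Longrightarrow> \<beta> \<bullet> \<alpha> = 1 \<Longrightarrow> \<alpha> - \<beta> \<notin> inversions w"
    and b: "b \<in> inversions w - {\<alpha>}"
    and unshifted: "\<not> (b \<bullet> \<alpha> = 1 \<and> b - \<alpha> \<in> Pos \<and> b - \<alpha> \<notin> inversions w)"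
  shows "refl \<alpha> b \<in> w ` Neg"
proof -
  note \<alpha>P = inversionsD[OF \<alpha>] and bP = inversionsD[of b w]
  have s\<Phi>: "refl \<alpha> b \<in> \<Phi>"
    using refl_in_roots[OF \<alpha>P(2)] bP(2) b by simp
  from inner_pos_roots_cases[OF \<alpha>P(1)] bP(1) b
  consider "b \<bullet> \<alpha> = -1" | "b \<bullet> \<alpha> = 0" | "b \<bullet> \<alpha> = 1"
    by blast
  then show ?thesis
  proof cases
    case 1
    then have "refl \<alpha> b = b + \<alpha>"
      using refl_root[OF \<alpha>P(2)] by simp
    then show ?thesis
      using weyl_add_mem_image_neg[OF w bP(3) \<alpha>P(3)] b s\<Phi> by simp
  next
    case 2
    then show ?thesis
      using refl_root[OF \<alpha>P(2), of b] bP(3) b by simp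
  next
    case 3
    then have s: "refl \<alpha> b = b - \<alpha>"
      using refl_root[OF \<alpha>P(2)] by simp
    show ?thesis
    proof (cases "b - \<alpha> \<in> Pos")
      case True
      then show ?thesis
        using unshifted 3 s by (simp add: inversions_def)
    next
      case False
      then have "\<alpha> - b \<in> Pos"
        using root_pos_or_neg[OF s\<Phi>] s by simp
      moreover have "\<alpha> - b \<notin> inversions w"
        using no_pair 3 b by simp
      ultimately have "- (b - \<alpha>) \<notin> w ` Neg"
        by (simp add: inversions_def)
      then show ?thesis
        using weyl_uminus_mem_image_neg_iff[OF w s\<Phi>] s by simp
    qed
  qed
qed

lemma inversions_refl_comp_unshift:
  assumes w: "w \<in> weyl_group \<Phi>" and \<alpha>: "\<alpha> \<in> inversions w"
    and no_pair: "\<And>\<beta>. \<beta> \<in> inversions w \<Longrightarrow> \<beta> \<bullet> \<alpha> = 1 \<Longrightarrow> \<alpha> - \<beta> \<notin> inversions w"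
    and b: "b \<in> inversions w - {\<alpha>}"
  shows "(if b \<bullet> \<alpha> = 1 \<and> b - \<alpha> \<in> Pos \<and> b - \<alpha> \<notin> inversions w then b - \<alpha> else b)
    \<in> inversions (refl \<alpha> \<circ> w)"
proof -
  have \<alpha>\<Phi>: "\<alpha> \<in> \<Phi>"
    using inversionsD(2)[OF \<alpha>] .
  show ?thesis
  proof (cases "b \<bullet> \<alpha> = 1 \<and> b - \<alpha> \<in> Pos \<and> b - \<alpha> \<notin> inversions w")
    case True
    have "refl \<alpha> (b - \<alpha>) = b"
      using True refl_root[OF \<alpha>\<Phi>, of "b - \<alpha>"] inner_root_self[OF \<alpha>\<Phi>] by (simp add: inner_diff_left)
    then show ?thesis
      using True inversionsD(3)[of b w] b inversions_refl_comp_iff[OF \<alpha>\<Phi>] by simp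
  next
    case False
    then have "b \<in> inversions (refl \<alpha> \<circ> w)"
      using refl_mem_image_neg_unshifted[OF assms] inversionsD(1)[of b w] b
        inversions_refl_comp_iff[OF \<alpha>\<Phi>] by blast
    then show ?thesis
      unfolding if_not_P[OF False] .
  qed
qed

lemma bij_betw_inversions_refl_comp:
  assumes w: "w \<in> weyl_group \<Phi>" and \<alpha>: "\<alpha> \<in> inversions w"
    and card: "card (inversions (refl \<alpha> \<circ> w)) = card (inversions w) - 1"
  shows "bij_betw (\<lambda>\<beta>. if \<beta> \<bullet> \<alpha> = 1 \<and> \<beta> - \<alpha> \<in> Pos \<and> \<beta> - \<alpha> \<notin> inversions w then \<beta> - \<alpha> else \<beta>)
    (inversions w - {\<alpha>}) (inversions (refl \<alpha> \<circ> w))"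
    (is "bij_betw ?\<psi> ?X ?Y")
proof -
  have "?\<psi> ` ?X \<subseteq> ?Y"
    using inversions_refl_comp_unshift[OF w \<alpha> inversions_refl_comp_no_pair[OF w \<alpha> card]] by blast
  moreover have "inj_on ?\<psi> ?X"
    by (rule inj_on_if_then_else) (auto simp: inj_on_def)
  moreover have "card ?X = card ?Y"
    using card \<alpha> finite_inversions by simp
  ultimately have "?\<psi> ` ?X = ?Y"
    using card_subset_eq[OF finite_inversions] card_image[of ?\<psi> ?X] by simp
  with \<open>inj_on ?\<psi> ?X\<close> show ?thesis
    unfolding bij_betw_def ..
qed

lemma inversions_simple_preimage_diff:
  assumes w: "w \<in> weyl_group \<Phi>" and d: "d \<in> \<Delta>" "w d = - \<alpha>"
    and b: "b \<in> inversions w" "b \<bullet> \<alpha> = 1" "b - \<alpha> \<in> Pos"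
  shows "b - \<alpha> \<in> inversions w"
proof (rule ccontr)
  assume "b - \<alpha> \<notin> inversions w"
  obtain x where x: "x \<in> Neg" "b = w x"
    using b(1) by (auto simp: inversions_def)
  have dP: "d \<in> Pos" "d \<in> \<Phi>"
    using simple_in_pos_roots[OF d(1)] pos_root_in_roots by auto
  have "b - \<alpha> = w (x + d)"
    using x(2) d(2) linear_add[OF weyl_group_linear[OF w]] by simp
  then have "x + d \<in> \<Phi>" "x + d \<notin> Neg"
    using \<open>b - \<alpha> \<notin> inversions w\<close> b(3) pos_root_in_roots weyl_group_root_preimage[OF w]
    by (auto simp: inversions_def)
  then have "x + d \<in> Pos"
    using root_pos_or_neg neg_roots_iff by blast
  have "x \<bullet> d = -1"
    using weyl_group_inner[OF w, of x d] x(2) d(2) b(2) by simp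
  then have "(- x) \<bullet> d = 1" "- x \<noteq> d"
    using inner_root_self[OF dP(2)] by auto
  then have "refl d (- x) \<in> Pos"
    using simple_refl_pos_roots[OF d(1)] x(1) by (simp add: neg_roots_iff)
  moreover have "refl d (- x) = - (x + d)"
    using refl_root[OF dP(2), of "- x"] \<open>(- x) \<bullet> d = 1\<close> by simp
  ultimately show False
    using uminus_pos_root_notin[OF \<open>x + d \<in> Pos\<close>] by simp
qed

lemma inversions_refl_comp_eq_Diff:
  assumes w: "w \<in> weyl_group \<Phi>" and \<alpha>: "\<alpha> \<in> inversions w"
    and card: "card (inversions (refl \<alpha> \<circ> w)) = card (inversions w) - 1"
    and simple: "inv w \<alpha> \<in> uminus ` \<Delta>"
  shows "inversions (refl \<alpha> \<circ> w) = inversions w - {\<alpha>}"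
proof -
  obtain d where d: "d \<in> \<Delta>" "inv w \<alpha> = - d"
    using simple by blast
  have "w d = - \<alpha>"
    using d(2) surj_f_inv_f[OF bij_is_surj[OF weyl_group_bij[OF w]], of \<alpha>]
      linear_neg[OF weyl_group_linear[OF w], of d] by (metis minus_minus)
  then have "(if \<beta> \<bullet> \<alpha> = 1 \<and> \<beta> - \<alpha> \<in> Pos \<and> \<beta> - \<alpha> \<notin> inversions w then \<beta> - \<alpha> else \<beta>) = \<beta>"
    if "\<beta> \<in> inversions w - {\<alpha>}" for \<beta>
    using inversions_simple_preimage_diff[OF w d(1)] that by auto
  then show ?thesis
    using bij_betw_imp_surj_on[OF bij_betw_inversions_refl_comp[OF w \<alpha> card]] by simp
qed

end

theorem mainTheorem15:
  fixes \<Phi> \<Delta> :: "'a::euclidean_space set" and w :: "'a \<Rightarrow> 'a" and \<alpha> :: 'a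
  assumes "simply_laced_root_system \<Phi>"
    and "simple_system \<Phi> \<Delta>"
    and "w \<in> weyl_group \<Phi>"
    and "\<alpha> \<in> pos_roots \<Phi> \<Delta> \<inter> w ` neg_roots \<Phi> \<Delta>"
    and "weyl_length \<Delta> (refl \<alpha> \<circ> w) = weyl_length \<Delta> w - 1"
  shows "bij_betw
           (\<lambda>\<beta>. if \<beta> \<bullet> \<alpha> = 1 \<and> \<beta> - \<alpha> \<in> pos_roots \<Phi> \<Delta>
                    \<and> \<beta> - \<alpha> \<notin> pos_roots \<Phi> \<Delta> \<inter> w ` neg_roots \<Phi> \<Delta>
                 then \<beta> - \<alpha> else \<beta>)
           ((pos_roots \<Phi> \<Delta> \<inter> w ` neg_roots \<Phi> \<Delta>) - {\<alpha>})
           (pos_roots \<Phi> \<Delta> \<inter> (refl \<alpha> \<circ> w) ` neg_roots \<Phi> \<Delta>)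
         \<and> (inv w \<alpha> \<in> uminus ` \<Delta> \<longrightarrow>
           pos_roots \<Phi> \<Delta> \<inter> (refl \<alpha> \<circ> w) ` neg_roots \<Phi> \<Delta>
             = (pos_roots \<Phi> \<Delta> \<inter> w ` neg_roots \<Phi> \<Delta>) - {\<alpha>})"
proof -
  interpret simply_laced \<Phi> \<Delta>
    using assms(1,2) by unfold_locales
  have w: "w \<in> weyl_group \<Phi>" and \<alpha>: "\<alpha> \<in> inversions w"
    using assms(3,4) by (simp_all add: inversions_def)
  have "refl \<alpha> \<circ> w \<in> weyl_group \<Phi>"
    using refl_comp_weyl_group[OF inversionsD(2)[OF \<alpha>] w] .
  then have "card (inversions (refl \<alpha> \<circ> w)) = card (inversions w) - 1"
    using assms(5) weyl_length_eq_card_inversions w by simp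
  then show ?thesis
    using bij_betw_inversions_refl_comp[OF w \<alpha>] inversions_refl_comp_eq_Diff[OF w \<alpha>]
    unfolding inversions_def by blast
qed

end
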